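(* Let $i,j,k$ be three distinct agents with nominal states $\tilde g_i,\tilde g_j,\tilde g_k\in\mathbb R^3$, let $\theta\in\mathbb R$, and let $g_i,g_j,g_k\in\mathbb R^3$ satisfy $$W_{jk}(g_i-g_k)+W_{ki}(g_j-g_k)=0.$$ Then for every $s,\tau\in\mathbb R^3$, with $S=\Theta\,\mathrm{diag}(s)\,\Theta^\top$ and $g'_r=Sg_r+\tau$ for $r\in\{i,j,k\}$, one also has $W_{jk}(g'_i-g'_k)+W_{ki}(g'_j-g'_k)=0$.
   Context: $R(\theta)$ is the $2\times2$ rotation matrix by $\theta$, $\Theta=\mathrm{diag}(R(\theta),1)\in\mathbb R^{3\times3}$. Write $\tilde g_r=[\tilde p_r^\top,\tilde\phi_r]^\top$ and $\Theta^\top\tilde g_r=[\tilde p^x_{r,\theta},\tilde p^y_{r,\theta},\tilde\phi_r]^\top$; for $u,v\in\{i,j,k\}$, $\tilde p^x_{uv,\theta}=\tilde p^x_{u,\theta}-\tilde p^x_{v,\theta}$, similarly $\tilde p^y_{uv,\theta}$, $\tilde\phi_{uv}=\tilde\phi_u-\tilde\phi_v$, $w_{uv}=\mathrm{diag}(\tilde p^x_{uv,\theta},\tilde p^y_{uv,\theta},\tilde\phi_{uv})$, and $W_{uv}=w_{uv}\Theta^\top$. *)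

theory Defs
  imports "HOL-Analysis.Analysis"
begin

definition rot2 :: "real \<Rightarrow> real^2^2" where
  "rot2 \<theta> = vector [vector [cos \<theta>, - sin \<theta>], vector [sin \<theta>, cos \<theta>]]"

definition Theta :: "real \<Rightarrow> real^3^3" where
  "Theta \<theta> = vector [vector [rot2 \<theta> $ 1 $ 1, rot2 \<theta> $ 1 $ 2, 0],
                        vector [rot2 \<theta> $ 2 $ 1, rot2 \<theta> $ 2 $ 2, 0],
                        vector [0, 0, 1]]"

definition diag3 :: "real^3 \<Rightarrow> real^3^3" where
  "diag3 v = (\<chi> a b. if a = b then v $ a else 0)"

definition w_mat :: "real \<Rightarrow> ('a \<Rightarrow> real^3) \<Rightarrow> 'a \<Rightarrow> 'a \<Rightarrow> real^3^3" where
  "w_mat \<theta> gt u v = diag3 (transpose (Theta \<theta>) *v gt u - transpose (Theta \<theta>) *v gt v)"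

definition W_mat :: "real \<Rightarrow> ('a \<Rightarrow> real^3) \<Rightarrow> 'a \<Rightarrow> 'a \<Rightarrow> real^3^3" where
  "W_mat \<theta> gt u v = w_mat \<theta> gt u v ** transpose (Theta \<theta>)"

end

theory Submission
  imports Defs
begin

text \<open>The translation \<open>\<tau>\<close> cancels in the differences \<open>g'\<^sub>r - g'\<^sub>q = S (g\<^sub>r - g\<^sub>q)\<close>.
  Since \<open>\<Theta>\<close> is orthogonal and diagonal matrices commute,
  \<open>W\<^sub>u\<^sub>v S = w\<^sub>u\<^sub>v \<Theta>\<^sup>T \<Theta> diag(s) \<Theta>\<^sup>T = diag(s) w\<^sub>u\<^sub>v \<Theta>\<^sup>T = diag(s) W\<^sub>u\<^sub>v\<close>, so the transformed
  left-hand side is \<open>diag(s)\<close> applied to the original one, which vanishes.\<close>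

lemma transpose_Theta_mult_Theta: "transpose (Theta \<theta>) ** Theta \<theta> = mat 1"
  by (simp add: vec_eq_iff forall_3 matrix_matrix_mult_def sum_3 transpose_def mat_def
      Theta_def rot2_def vector_3 power2_eq_square[symmetric])

lemma diag3_mult_commute: "diag3 a ** diag3 b = diag3 b ** diag3 a"
  by (simp add: vec_eq_iff forall_3 matrix_matrix_mult_def sum_3 diag3_def)

lemma W_mat_mult_conj_diag3:
  "W_mat \<theta> gt u v ** (Theta \<theta> ** diag3 s ** transpose (Theta \<theta>)) = diag3 s ** W_mat \<theta> gt u v"
proof -
  have "W_mat \<theta> gt u v ** (Theta \<theta> ** diag3 s ** transpose (Theta \<theta>))
      = w_mat \<theta> gt u v ** (transpose (Theta \<theta>) ** Theta \<theta>) ** diag3 s ** transpose (Theta \<theta>)"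
    by (simp add: W_mat_def matrix_mul_assoc)
  also have "\<dots> = (w_mat \<theta> gt u v ** diag3 s) ** transpose (Theta \<theta>)"
    by (simp add: transpose_Theta_mult_Theta)
  also have "\<dots> = diag3 s ** W_mat \<theta> gt u v"
    by (simp add: W_mat_def w_mat_def diag3_mult_commute matrix_mul_assoc)
  finally show ?thesis .
qed

lemma linear_relation_affine_invariant:
  fixes A B S D :: "'a::comm_ring_1^'n^'n" and x y z \<tau> :: "'a^'n"
  assumes "A ** S = D ** A" and "B ** S = D ** B"
    and "A *v (x - z) + B *v (y - z) = 0"
  shows "A *v ((S *v x + \<tau>) - (S *v z + \<tau>)) + B *v ((S *v y + \<tau>) - (S *v z + \<tau>)) = 0"
proof -
  have "A *v ((S *v x + \<tau>) - (S *v z + \<tau>)) + B *v ((S *v y + \<tau>) - (S *v z + \<tau>))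
      = (A ** S) *v (x - z) + (B ** S) *v (y - z)"
    by (simp add: matrix_vector_mult_diff_distrib matrix_vector_mul_assoc)
  also have "\<dots> = D *v (A *v (x - z) + B *v (y - z))"
    by (simp add: assms(1,2) matrix_vector_mul_assoc matrix_vector_right_distrib)
  finally show ?thesis
    using assms(3) by simp
qed

theorem lemma5:
  fixes gt :: "'a \<Rightarrow> real^3" and g :: "'a \<Rightarrow> real^3"
    and i j k :: 'a and \<theta> :: real
  assumes "i \<noteq> j" and "j \<noteq> k" and "i \<noteq> k"
    and "W_mat \<theta> gt j k *v (g i - g k) + W_mat \<theta> gt k i *v (g j - g k) = 0"
  shows "\<forall>s \<tau> :: real^3.
     let S = Theta \<theta> ** diag3 s ** transpose (Theta \<theta>);
         g' = (\<lambda>r. S *v g r + \<tau>)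
     in W_mat \<theta> gt j k *v (g' i - g' k) + W_mat \<theta> gt k i *v (g' j - g' k) = 0"
  using linear_relation_affine_invariant[OF W_mat_mult_conj_diag3 W_mat_mult_conj_diag3 assms(4)]
  by (simp add: Let_def)

end
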